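(* Let $(G,\mathcal F_\bullet G,\mathfrak R)$ be a filtered Rota–Baxter group. Then $(\mathsf{gr}\,G,\mathsf{gr}\,\mathfrak R)$ is a graded Rota–Baxter Lie ring; that is, $\mathsf{gr}\,\mathfrak R$ is an additive map satisfying $[\mathsf{gr}\mathfrak R(a),\mathsf{gr}\mathfrak R(b)]=\mathsf{gr}\mathfrak R\big([\mathsf{gr}\mathfrak R(a),b]+[a,\mathsf{gr}\mathfrak R(b)]+[a,b]\big)$ for all $a,b\in\mathsf{gr}\,G$, and $\mathsf{gr}\mathfrak R(\mathsf{gr}_nG)\subset\mathsf{gr}_nG$ for all $n\ge1$.
   Context: For a group $G$, write $(x,y)=xyx^{-1}y^{-1}$, and for subgroups $H,K$ let $(H,K)$ be the subgroup generated by $(x,y)$, $x\in H$, $y\in K$. A filtered group $(G,\mathcal F_\bullet G)$ is a group with subgroups $G=\mathcal F_1G\supset\mathcal F_2G\supset\cdots$ such that $(\mathcal F_nG,\mathcal F_mG)\subset\mathcal F_{n+m}G$ for all $n,m\ge1$; then each $\mathcal F_nG$ is normal and $\mathsf{gr}_nG=\mathcal F_nG/\mathcal F_{n+1}G$ is an abelian group, written additively: $\bar x+\bar y=\overline{xy}$. Let $\mathsf{gr}\,G=\bigoplus_{n\ge1}\mathsf{gr}_nG$, with the biadditive bracket determined by $[\bar x,\bar y]=\overline{(x,y)}\in\mathsf{gr}_{n+m}G$ for $x\in\mathcal F_nG$, $y\in\mathcal F_mG$; this is a graded Lie ring. A Rota–Baxter group is a group with a map $\mathfrak R$ satisfying $\mathfrak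 R(g)\mathfrak R(h)=\mathfrak R(g\mathfrak R(g)h\mathfrak R(g)^{-1})$; a filtered Rota–Baxter group $(G,\mathcal F_\bullet G,\mathfrak R)$ is a filtered group with a Rota–Baxter operator satisfying $\mathfrak R(\mathcal F_nG)\subset\mathcal F_nG$ for all $n$. The maps $\mathfrak R_n:\mathsf{gr}_nG\to\mathsf{gr}_nG$, $\mathfrak R_n(\bar x)=\overline{\mathfrak R(x)}$, are well-defined group homomorphisms, and $\mathsf{gr}\,\mathfrak R:\mathsf{gr}\,G\to\mathsf{gr}\,G$ is defined by $\mathsf{gr}\mathfrak R(a_1+\cdots+a_k)=\mathfrak R_{i_1}(a_1)+\cdots+\mathfrak R_{i_k}(a_k)$ for $a_j\in\mathsf{gr}_{i_j}G$. *)

theory Defs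
  imports "HOL-Algebra.Algebra"
begin

definition grp_comm :: "('a, 'b) monoid_scheme \<Rightarrow> 'a \<Rightarrow> 'a \<Rightarrow> 'a" where
  "grp_comm G x y = x \<otimes>\<^bsub>G\<^esub> y \<otimes>\<^bsub>G\<^esub> inv\<^bsub>G\<^esub> x \<otimes>\<^bsub>G\<^esub> inv\<^bsub>G\<^esub> y"

text \<open>Filtered group; the filtration is indexed by n \<ge> 1 (the value F 0 is irrelevant).\<close>
definition filtered_group :: "('a, 'b) monoid_scheme \<Rightarrow> (nat \<Rightarrow> 'a set) \<Rightarrow> bool" where
  "filtered_group G F \<longleftrightarrow> group G \<and> F 1 = carrier G \<and>
     (\<forall>n\<ge>1. subgroup (F n) G \<and> F (Suc n) \<subseteq> F n) \<and>
     (\<forall>n m. n \<ge> 1 \<longrightarrow> m \<ge> 1 \<longrightarrow>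
        generate G {grp_comm G x y | x y. x \<in> F n \<and> y \<in> F m} \<subseteq> F (n + m))"

definition rota_baxter :: "('a, 'b) monoid_scheme \<Rightarrow> ('a \<Rightarrow> 'a) \<Rightarrow> bool" where
  "rota_baxter G R \<longleftrightarrow> R \<in> carrier G \<rightarrow> carrier G \<and>
     (\<forall>g\<in>carrier G. \<forall>h\<in>carrier G.
        R g \<otimes>\<^bsub>G\<^esub> R h = R (g \<otimes>\<^bsub>G\<^esub> R g \<otimes>\<^bsub>G\<^esub> h \<otimes>\<^bsub>G\<^esub> inv\<^bsub>G\<^esub> (R g)))"

definition filtered_rota_baxter ::
  "('a, 'b) monoid_scheme \<Rightarrow> (nat \<Rightarrow> 'a set) \<Rightarrow> ('a \<Rightarrow> 'a) \<Rightarrow> bool" where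
  "filtered_rota_baxter G F R \<longleftrightarrow> filtered_group G F \<and> rota_baxter G R \<and>
     (\<forall>n\<ge>1. R ` F n \<subseteq> F n)"

definition gr_n :: "('a, 'b) monoid_scheme \<Rightarrow> (nat \<Rightarrow> 'a set) \<Rightarrow> nat \<Rightarrow> 'a set set" where
  "gr_n G F n = {F (Suc n) #>\<^bsub>G\<^esub> x | x. x \<in> F n}"

text \<open>gr G = direct sum of the gr_n G (n \<ge> 1): finitely supported families of cosets.
  The zero of degree n is the coset F (Suc n); the (unused) degree-0 slot is fixed to be F 1.\<close>
definition gr_zero :: "(nat \<Rightarrow> 'a set) \<Rightarrow> nat \<Rightarrow> 'a set" where
  "gr_zero F = (\<lambda>n. F (Suc n))"

definition gr :: "('a, 'b) monoid_scheme \<Rightarrow> (nat \<Rightarrow> 'a set) \<Rightarrow> (nat \<Rightarrow> 'a set) set" where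
  "gr G F = {a. a 0 = F 1 \<and> (\<forall>n\<ge>1. a n \<in> gr_n G F n) \<and> finite {n. a n \<noteq> F (Suc n)}}"

text \<open>The homogeneous elements of degree n, i.e. the copy of gr_n G inside gr G.\<close>
definition gr_deg :: "('a, 'b) monoid_scheme \<Rightarrow> (nat \<Rightarrow> 'a set) \<Rightarrow> nat \<Rightarrow> (nat \<Rightarrow> 'a set) set" where
  "gr_deg G F n = {a \<in> gr G F. \<forall>k. k \<noteq> n \<longrightarrow> a k = F (Suc k)}"

definition gr_add :: "('a, 'b) monoid_scheme \<Rightarrow> (nat \<Rightarrow> 'a set) \<Rightarrow> (nat \<Rightarrow> 'a set) \<Rightarrow> nat \<Rightarrow> 'a set" where
  "gr_add G a b = (\<lambda>n. a n <#>\<^bsub>G\<^esub> b n)"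

definition rep :: "'a set \<Rightarrow> 'a" where
  "rep C = (SOME x. x \<in> C)"

text \<open>Bracket: biadditive extension of [overline x, overline y] = overline{(x,y)};
  the degree-n component of [a,b] is the sum over i + j = n (i, j \<ge> 1) of [a_i, b_j].\<close>
definition gr_bracket :: "('a, 'b) monoid_scheme \<Rightarrow> (nat \<Rightarrow> 'a set) \<Rightarrow>
    (nat \<Rightarrow> 'a set) \<Rightarrow> (nat \<Rightarrow> 'a set) \<Rightarrow> nat \<Rightarrow> 'a set" where
  "gr_bracket G F a b = (\<lambda>n. F (Suc n) #>\<^bsub>G\<^esub>
      foldr (\<lambda>x y. x \<otimes>\<^bsub>G\<^esub> y)
        (map (\<lambda>i. grp_comm G (rep (a i)) (rep (b (n - i)))) [1..<n]) \<one>\<^bsub>G\<^esub>)"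

definition gr_R :: "('a, 'b) monoid_scheme \<Rightarrow> (nat \<Rightarrow> 'a set) \<Rightarrow> ('a \<Rightarrow> 'a) \<Rightarrow>
    (nat \<Rightarrow> 'a set) \<Rightarrow> nat \<Rightarrow> 'a set" where
  "gr_R G F R a = (\<lambda>n. F (Suc n) #>\<^bsub>G\<^esub> R (rep (a n)))"

end

theory Submission
  imports Defs
begin

text \<open>Fix n \<ge> 1 and work in the quotient G / F (n + 1). Elements of F n are central there,
  and the Rota--Baxter identity makes R compatible with congruence modulo F (n + 1) and
  multiplicative modulo F (n + 1) on products x y with y \<in> F n; this gives additivity of gr R.
  For x \<in> F i and y \<in> F j, applying the Rota--Baxter identity to both R x R y and R y R x shows
  that c = (R x, R y) equals R (u c (inv v) (inv c)), where u = x (R x) y (inv (R x)) and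
  v = y (R y) x (inv (R y)). Modulo F (i + j + 1) the central factor c cancels and u (inv v)
  becomes (R x, y) (x, R y) (x, y), which is the Rota--Baxter identity for the bracket of
  homogeneous elements; the general case follows by summing over components.\<close>

context group
begin

lemma inv_mult_cancel_left [simp]: "x \<in> carrier G \<Longrightarrow> y \<in> carrier G \<Longrightarrow> inv x \<otimes> (x \<otimes> y) = y"
  by (simp add: m_assoc [symmetric])

lemma mult_inv_cancel_left [simp]: "x \<in> carrier G \<Longrightarrow> y \<in> carrier G \<Longrightarrow> x \<otimes> (inv x \<otimes> y) = y"
  by (simp add: m_assoc [symmetric])

lemma grp_comm_closed [simp]:
  "x \<in> carrier G \<Longrightarrow> y \<in> carrier G \<Longrightarrow> grp_comm G x y \<in> carrier G"
  by (simp add: grp_comm_def)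

lemma grp_comm_swap: "x \<in> carrier G \<Longrightarrow> y \<in> carrier G \<Longrightarrow> grp_comm G x y = inv (grp_comm G y x)"
  by (simp add: grp_comm_def inv_mult_group m_assoc)

lemma grp_comm_mult_left_commuting:
  assumes k: "k \<in> carrier G" and x: "x \<in> carrier G" and y: "y \<in> carrier G"
    and ky: "k \<otimes> y = y \<otimes> k" and kc: "k \<otimes> grp_comm G x y = grp_comm G x y \<otimes> k"
  shows "grp_comm G (k \<otimes> x) y = grp_comm G x y"
proof -
  let ?c = "grp_comm G x y"
  have conj: "x \<otimes> (y \<otimes> inv x) = ?c \<otimes> y" using x y by (simp add: grp_comm_def m_assoc)
  have "grp_comm G (k \<otimes> x) y = k \<otimes> (x \<otimes> (y \<otimes> inv x)) \<otimes> (inv k \<otimes> inv y)"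
    using k x y by (simp add: grp_comm_def inv_mult_group m_assoc)
  also have "\<dots> = (k \<otimes> ?c) \<otimes> y \<otimes> (inv k \<otimes> inv y)" using k x y by (simp add: conj m_assoc)
  also have "\<dots> = ?c \<otimes> ((y \<otimes> k) \<otimes> (inv k \<otimes> inv y))" using k x y by (simp add: kc ky m_assoc)
  also have "\<dots> = ?c" using k x y by (simp add: m_assoc)
  finally show ?thesis .
qed

definition central :: "'a \<Rightarrow> bool" where
  "central z \<longleftrightarrow> z \<in> carrier G \<and> (\<forall>g\<in>carrier G. z \<otimes> g = g \<otimes> z)"

lemma central_mult_inv_cancel:
  assumes u: "u \<in> carrier G" and v: "v \<in> carrier G" and c: "central c"
  shows "u \<otimes> c \<otimes> inv v \<otimes> inv c = u \<otimes> inv v"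
proof -
  have cc: "c \<in> carrier G" using c by (simp add: central_def)
  have "c \<otimes> inv v = inv v \<otimes> c" using c v by (simp add: central_def)
  then have "u \<otimes> c \<otimes> inv v \<otimes> inv c = u \<otimes> inv v \<otimes> (c \<otimes> inv c)"
    using u v cc by (simp add: m_assoc)
  then show ?thesis using u v cc by simp
qed

lemma conj_quotient_eq_grp_comm_prod:
  assumes x: "x \<in> carrier G" and y: "y \<in> carrier G" and a: "a \<in> carrier G" and b: "b \<in> carrier G"
    and c1: "central (grp_comm G a y)" and c2: "central (grp_comm G x b)"
  shows "(x \<otimes> a \<otimes> y \<otimes> inv a) \<otimes> inv (y \<otimes> b \<otimes> x \<otimes> inv b)
     = grp_comm G a y \<otimes> grp_comm G x b \<otimes> grp_comm G x y"
proof -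
  let ?c1 = "grp_comm G a y" and ?c2 = "grp_comm G x b"
  have c1c: "?c1 \<in> carrier G" and c2c: "?c2 \<in> carrier G" using x y a b by auto
  have e1: "a \<otimes> (y \<otimes> inv a) = ?c1 \<otimes> y" using a y by (simp add: grp_comm_def m_assoc)
  have e2: "b \<otimes> (inv x \<otimes> inv b) = inv x \<otimes> ?c2" using x b by (simp add: grp_comm_def m_assoc)
  have "(x \<otimes> a \<otimes> y \<otimes> inv a) \<otimes> inv (y \<otimes> b \<otimes> x \<otimes> inv b)
      = x \<otimes> (a \<otimes> (y \<otimes> inv a)) \<otimes> (b \<otimes> (inv x \<otimes> inv b)) \<otimes> inv y"
    using x y a b by (simp add: inv_mult_group m_assoc)
  also have "\<dots> = x \<otimes> (?c1 \<otimes> y) \<otimes> (inv x \<otimes> ?c2) \<otimes> inv y" by (simp add: e1 e2)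
  also have "\<dots> = ?c1 \<otimes> (x \<otimes> y \<otimes> inv x) \<otimes> ?c2 \<otimes> inv y"
  proof -
    have "x \<otimes> ?c1 = ?c1 \<otimes> x" using c1 x by (simp add: central_def)
    then show ?thesis using x y c1c c2c by (simp add: m_assoc flip: m_assoc[of x ?c1])
  qed
  also have "\<dots> = ?c1 \<otimes> ?c2 \<otimes> (x \<otimes> y \<otimes> inv x \<otimes> inv y)"
  proof -
    have "(x \<otimes> y \<otimes> inv x) \<otimes> ?c2 = ?c2 \<otimes> (x \<otimes> y \<otimes> inv x)" using c2 x y by (simp add: central_def)
    then show ?thesis using x y c1c c2c by (simp add: m_assoc)
  qed
  finally show ?thesis by (simp add: grp_comm_def)
qed

lemma foldr_mult_closed:
  "\<forall>t\<in>set l. t \<in> carrier G \<Longrightarrow> foldr (\<lambda>x y. x \<otimes> y) l \<one> \<in> carrier G"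
  by (induction l) auto

lemma foldr_mult_central_factors:
  assumes "\<forall>i\<in>set l. f i \<in> carrier G \<and> central (g i) \<and> central (h i)"
  shows "foldr (\<lambda>x y. x \<otimes> y) (map (\<lambda>i. f i \<otimes> g i \<otimes> h i) l) \<one>
    = foldr (\<lambda>x y. x \<otimes> y) (map f l) \<one> \<otimes> foldr (\<lambda>x y. x \<otimes> y) (map g l) \<one>
      \<otimes> foldr (\<lambda>x y. x \<otimes> y) (map h l) \<one>"
  using assms
proof (induction l)
  case Nil
  then show ?case by simp
next
  case (Cons a l)
  let ?F = "foldr (\<lambda>x y. x \<otimes> y) (map f l) \<one>"
  let ?G = "foldr (\<lambda>x y. x \<otimes> y) (map g l) \<one>"
  let ?H = "foldr (\<lambda>x y. x \<otimes> y) (map h l) \<one>"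
  have F: "?F \<in> carrier G" using Cons.prems by (intro foldr_mult_closed) auto
  have Gc: "?G \<in> carrier G" using Cons.prems by (intro foldr_mult_closed) (auto simp: central_def)
  have H: "?H \<in> carrier G" using Cons.prems by (intro foldr_mult_closed) (auto simp: central_def)
  have fa: "f a \<in> carrier G" and ga: "g a \<in> carrier G" and ha: "h a \<in> carrier G"
    and gc: "central (g a)" and hc: "central (h a)" using Cons.prems by (auto simp: central_def)
  have "(f a \<otimes> g a \<otimes> h a) \<otimes> (?F \<otimes> ?G \<otimes> ?H) = f a \<otimes> g a \<otimes> (h a \<otimes> (?F \<otimes> ?G)) \<otimes> ?H"
    using fa ga ha F Gc H by (simp add: m_assoc)
  also have "\<dots> = f a \<otimes> g a \<otimes> ((?F \<otimes> ?G) \<otimes> h a) \<otimes> ?H"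
    using hc F Gc by (simp add: central_def)
  also have "\<dots> = f a \<otimes> (g a \<otimes> ?F) \<otimes> ?G \<otimes> h a \<otimes> ?H"
    using fa ga ha F Gc H by (simp add: m_assoc)
  also have "\<dots> = f a \<otimes> (?F \<otimes> g a) \<otimes> ?G \<otimes> h a \<otimes> ?H"
    using gc F by (simp add: central_def)
  also have "\<dots> = (f a \<otimes> ?F) \<otimes> (g a \<otimes> ?G) \<otimes> (h a \<otimes> ?H)"
    using fa ga ha F Gc H by (simp add: m_assoc)
  finally show ?case using Cons by simp
qed

end

locale rota_baxter_group = group +
  fixes R :: "'a \<Rightarrow> 'a"
  assumes rota_baxter: "rota_baxter G R"
begin

lemma R_closed: "x \<in> carrier G \<Longrightarrow> R x \<in> carrier G"
  using rota_baxter by (auto simp: rota_baxter_def)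

lemma R_mult: "x \<in> carrier G \<Longrightarrow> y \<in> carrier G \<Longrightarrow> R x \<otimes> R y = R (x \<otimes> R x \<otimes> y \<otimes> inv (R x))"
  using rota_baxter by (auto simp: rota_baxter_def)

lemma R_one: "R \<one> = \<one>"
proof -
  have "R \<one> \<otimes> R \<one> = R \<one>" using R_mult[of \<one> \<one>] R_closed by (simp add: m_assoc)
  then show ?thesis using R_closed[of \<one>] by (metis l_cancel_one one_closed)
qed

lemma R_inv_R: "g \<in> carrier G \<Longrightarrow> R (inv (R g) \<otimes> inv g \<otimes> R g) = inv (R g)"
proof -
  assume g: "g \<in> carrier G"
  have Rg: "R g \<in> carrier G" using R_closed g .
  let ?h = "inv (R g) \<otimes> inv g \<otimes> R g"
  have h: "?h \<in> carrier G" using g Rg by simp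
  have "R g \<otimes> R ?h = R (g \<otimes> R g \<otimes> ?h \<otimes> inv (R g))" using R_mult g h by simp
  also have "g \<otimes> R g \<otimes> ?h \<otimes> inv (R g) = \<one>" using g Rg by (simp add: m_assoc)
  finally have "R g \<otimes> R ?h = \<one>" using R_one by simp
  then show ?thesis using Rg h R_closed[OF h] by (metis inv_equality inv_comm)
qed

lemma grp_comm_R:
  assumes x: "x \<in> carrier G" and y: "y \<in> carrier G"
  defines "u \<equiv> x \<otimes> R x \<otimes> y \<otimes> inv (R x)" and "v \<equiv> y \<otimes> R y \<otimes> x \<otimes> inv (R y)"
    and "c \<equiv> grp_comm G (R x) (R y)"
  shows "c = R (u \<otimes> c \<otimes> inv v \<otimes> inv c)"
proof -
  have Rx: "R x \<in> carrier G" and Ry: "R y \<in> carrier G" using R_closed x y by auto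
  have u: "u \<in> carrier G" and v: "v \<in> carrier G" using x y Rx Ry by (auto simp: u_def v_def)
  have Ru: "R u \<in> carrier G" and Rv: "R v \<in> carrier G" using R_closed u v by auto
  have eu: "R x \<otimes> R y = R u" using R_mult x y by (simp add: u_def)
  have ev: "R y \<otimes> R x = R v" using R_mult x y by (simp add: v_def)
  have cc: "c = R u \<otimes> inv (R v)"
    using Rx Ry by (simp add: c_def grp_comm_def flip: eu ev add: inv_mult_group m_assoc)
  have ic: "inv c = R v \<otimes> inv (R u)" using cc Ru Rv by (simp add: inv_mult_group)
  let ?h = "inv (R v) \<otimes> inv v \<otimes> R v"
  have h: "?h \<in> carrier G" using v Rv by simp
  have "c = R u \<otimes> R ?h" using cc R_inv_R[OF v] by simp
  also have "\<dots> = R (u \<otimes> R u \<otimes> ?h \<otimes> inv (R u))" using R_mult u h by simp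
  also have "u \<otimes> R u \<otimes> ?h \<otimes> inv (R u) = u \<otimes> (R u \<otimes> inv (R v)) \<otimes> inv v \<otimes> (R v \<otimes> inv (R u))"
    using u v Ru Rv by (simp add: m_assoc)
  also have "\<dots> = u \<otimes> c \<otimes> inv v \<otimes> inv c" using cc ic by simp
  finally show ?thesis .
qed

end

locale filtration = group +
  fixes F :: "nat \<Rightarrow> 'a set"
  assumes filtered: "filtered_group G F"
begin

lemma F_one: "F 1 = carrier G"
  using filtered by (simp add: filtered_group_def)

lemma F_subgroup: "1 \<le> n \<Longrightarrow> subgroup (F n) G"
  using filtered by (simp add: filtered_group_def)

lemma F_Suc_subgroup: "subgroup (F (Suc n)) G"
  using F_subgroup by simp

lemma F_closed: "1 \<le> n \<Longrightarrow> x \<in> F n \<Longrightarrow> x \<in> carrier G"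
  using subgroup.mem_carrier[OF F_subgroup] .

lemma F_Suc_closed: "x \<in> F (Suc n) \<Longrightarrow> x \<in> carrier G"
  using F_closed[of "Suc n"] by simp

lemma F_Suc_subset: "1 \<le> n \<Longrightarrow> F (Suc n) \<subseteq> F n"
  using filtered by (simp add: filtered_group_def)

lemma grp_comm_F:
  assumes "1 \<le> n" "1 \<le> m" "x \<in> F n" "y \<in> F m"
  shows "grp_comm G x y \<in> F (n + m)"
proof -
  have "generate G {grp_comm G x y | x y. x \<in> F n \<and> y \<in> F m} \<subseteq> F (n + m)"
    using filtered assms(1,2) by (simp add: filtered_group_def)
  moreover have "grp_comm G x y \<in> generate G {grp_comm G x y | x y. x \<in> F n \<and> y \<in> F m}"
    by (rule generate.incl) (use assms in blast)
  ultimately show ?thesis by blast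
qed

lemma F_normal: "1 \<le> n \<Longrightarrow> F n \<lhd> G"
  unfolding normal_inv_iff
proof (intro conjI ballI)
  assume n: "1 \<le> n"
  show "subgroup (F n) G" using F_subgroup n .
  fix x h assume x: "x \<in> carrier G" and h: "h \<in> F n"
  have "grp_comm G x h \<in> F (Suc n)" using grp_comm_F[of 1 n x h] n x h F_one by simp
  then have "grp_comm G x h \<otimes> h \<in> F n"
    using F_Suc_subset[OF n] subgroup.m_closed[OF F_subgroup[OF n]] h by blast
  moreover have "grp_comm G x h \<otimes> h = x \<otimes> h \<otimes> inv x"
    using x F_closed[OF n h] by (simp add: grp_comm_def m_assoc)
  ultimately show "x \<otimes> h \<otimes> inv x \<in> F n" by simp
qed

lemma F_Suc_conj_closed:
  assumes "g \<in> carrier G" "h \<in> F (Suc n)"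
  shows "g \<otimes> h \<otimes> inv g \<in> F (Suc n)"
proof -
  have "F (Suc n) \<lhd> G" using F_normal by simp
  then show ?thesis using assms by (simp add: normal_inv_iff)
qed

lemma foldr_mult_F: "1 \<le> n \<Longrightarrow> \<forall>t\<in>set l. t \<in> F n \<Longrightarrow> foldr (\<lambda>x y. x \<otimes> y) l \<one> \<in> F n"
proof (induction l)
  case Nil
  then show ?case using subgroup.one_closed[OF F_subgroup] by simp
next
  case (Cons a l)
  then show ?case using subgroup.m_closed[OF F_subgroup[OF Cons.prems(1)]] by simp
qed

definition quot :: "nat \<Rightarrow> 'a set monoid" where
  "quot n = G Mod F (Suc n)"

definition proj :: "nat \<Rightarrow> 'a \<Rightarrow> 'a set" where
  "proj n x = F (Suc n) #> x"

lemma quot_group: "group (quot n)"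
  unfolding quot_def using normal.factorgroup_is_group[OF F_normal] by simp

lemma quot_mult: "A \<otimes>\<^bsub>quot n\<^esub> B = A <#> B"
  by (simp add: quot_def)

lemma proj_hom: "proj n \<in> hom G (quot n)"
  unfolding quot_def proj_def using normal.r_coset_hom_Mod[OF F_normal] by simp

lemma proj_group_hom: "group_hom G (quot n) (proj n)"
  using proj_hom quot_group by (simp add: group_hom_def group_hom_axioms_def is_group)

lemma proj_closed: "x \<in> carrier G \<Longrightarrow> proj n x \<in> carrier (quot n)"
  using group_hom.hom_closed[OF proj_group_hom] .

lemma proj_mult: "x \<in> carrier G \<Longrightarrow> y \<in> carrier G \<Longrightarrow> proj n (x \<otimes> y) = proj n x \<otimes>\<^bsub>quot n\<^esub> proj n y"
  using group_hom.hom_mult[OF proj_group_hom] by simp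

lemma proj_inv: "x \<in> carrier G \<Longrightarrow> proj n (inv x) = inv\<^bsub>quot n\<^esub> (proj n x)"
  using group_hom.hom_inv[OF proj_group_hom] by simp

lemma proj_one: "proj n \<one> = \<one>\<^bsub>quot n\<^esub>"
  using group_hom.hom_one[OF proj_group_hom] by simp

lemma proj_grp_comm:
  "x \<in> carrier G \<Longrightarrow> y \<in> carrier G \<Longrightarrow> proj n (grp_comm G x y) = grp_comm (quot n) (proj n x) (proj n y)"
  by (simp add: grp_comm_def proj_mult proj_inv)

lemma proj_foldr:
  "\<forall>t\<in>set l. t \<in> carrier G \<Longrightarrow>
   proj n (foldr (\<lambda>x y. x \<otimes> y) l \<one>) = foldr (\<lambda>x y. x \<otimes>\<^bsub>quot n\<^esub> y) (map (proj n) l) \<one>\<^bsub>quot n\<^esub>"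
proof (induction l)
  case Nil
  then show ?case using proj_one by simp
next
  case (Cons a l)
  then show ?case using proj_mult foldr_mult_closed by simp
qed

lemma proj_eq_iff:
  assumes x: "x \<in> carrier G" and y: "y \<in> carrier G"
  shows "proj n x = proj n y \<longleftrightarrow> x \<otimes> inv y \<in> F (Suc n)"
proof
  assume "proj n x = proj n y"
  then have "x \<in> F (Suc n) #> y" using rcos_self[OF x F_Suc_subgroup[of n]] by (simp add: proj_def)
  then show "x \<otimes> inv y \<in> F (Suc n)" using subgroup.rcos_module_imp[OF F_Suc_subgroup is_group y] by simp
next
  assume "x \<otimes> inv y \<in> F (Suc n)"
  then have "x \<in> F (Suc n) #> y" using subgroup.rcos_module_rev[OF F_Suc_subgroup is_group y x] by simp
  then show "proj n x = proj n y" unfolding proj_def using repr_independence[OF _ y F_Suc_subgroup] by simp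
qed

lemma proj_F_Suc: "k \<in> F (Suc n) \<Longrightarrow> proj n k = \<one>\<^bsub>quot n\<^esub>"
  unfolding proj_def quot_def using subgroup.rcos_const[OF F_Suc_subgroup is_group] by simp

lemma proj_commute:
  assumes x: "x \<in> carrier G" and y: "y \<in> carrier G" and c: "grp_comm G x y \<in> F (Suc n)"
  shows "proj n x \<otimes>\<^bsub>quot n\<^esub> proj n y = proj n y \<otimes>\<^bsub>quot n\<^esub> proj n x"
proof -
  have "(x \<otimes> y) \<otimes> inv (y \<otimes> x) = grp_comm G x y"
    using x y by (simp add: grp_comm_def inv_mult_group m_assoc)
  then have "proj n (x \<otimes> y) = proj n (y \<otimes> x)" using proj_eq_iff[of "x \<otimes> y" "y \<otimes> x" n] x y c by simp
  then show ?thesis using x y by (simp add: proj_mult)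
qed

lemma proj_central:
  assumes n: "1 \<le> n" and c: "c \<in> F n"
  shows "group.central (quot n) (proj n c)"
  unfolding group.central_def[OF quot_group]
proof (intro conjI ballI)
  have cc: "c \<in> carrier G" using F_closed n c .
  then show "proj n c \<in> carrier (quot n)" by (rule proj_closed)
  fix A assume "A \<in> carrier (quot n)"
  then obtain g where g: "g \<in> carrier G" and A: "A = proj n g"
    unfolding quot_def proj_def carrier_FactGroup RCOSETS_def by blast
  have "g \<in> F 1" using g F_one by simp
  then have "grp_comm G c g \<in> F (Suc n)" using grp_comm_F[of n 1 c g] n c by simp
  then show "proj n c \<otimes>\<^bsub>quot n\<^esub> A = A \<otimes>\<^bsub>quot n\<^esub> proj n c"
    unfolding A using proj_commute[OF cc g] by simp
qed

lemma proj_grp_comm_cong_left: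
  assumes i: "1 \<le> i" and j: "1 \<le> j" and x: "x \<in> F i" and x': "x' \<in> carrier G"
    and xx': "proj i x' = proj i x" and y: "y \<in> F j"
  shows "proj (i + j) (grp_comm G x' y) = proj (i + j) (grp_comm G x y)"
proof -
  let ?k = "x' \<otimes> inv x" and ?Q = "quot (i + j)" and ?p = "proj (i + j)"
  have xc: "x \<in> carrier G" using F_closed i x .
  have yc: "y \<in> carrier G" using F_closed j y .
  have kc: "?k \<in> carrier G" using xc x' by simp
  have k: "?k \<in> F (Suc i)" using proj_eq_iff[OF x' xc, of i] xx' by simp
  have "grp_comm G ?k y \<in> F (Suc (i + j))" using grp_comm_F[of "Suc i" j] j k y by simp
  then have ky: "?p ?k \<otimes>\<^bsub>?Q\<^esub> ?p y = ?p y \<otimes>\<^bsub>?Q\<^esub> ?p ?k"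
    using proj_commute[OF kc yc] by simp
  have "group.central ?Q (?p (grp_comm G x y))" using proj_central grp_comm_F i j x y by simp
  then have kc': "?p ?k \<otimes>\<^bsub>?Q\<^esub> grp_comm ?Q (?p x) (?p y) = grp_comm ?Q (?p x) (?p y) \<otimes>\<^bsub>?Q\<^esub> ?p ?k"
    using proj_closed[OF kc] unfolding group.central_def[OF quot_group] proj_grp_comm[OF xc yc] by simp
  have "?p (grp_comm G x' y) = grp_comm ?Q (?p ?k \<otimes>\<^bsub>?Q\<^esub> ?p x) (?p y)"
    using kc xc yc x' by (simp add: proj_grp_comm proj_mult [symmetric] m_assoc)
  also have "\<dots> = grp_comm ?Q (?p x) (?p y)"
    by (rule group.grp_comm_mult_left_commuting[OF quot_group proj_closed[OF kc]
          proj_closed[OF xc] proj_closed[OF yc] ky kc'])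
  also have "\<dots> = ?p (grp_comm G x y)" using proj_grp_comm[OF xc yc] by simp
  finally show ?thesis .
qed

lemma proj_grp_comm_cong_right:
  assumes i: "1 \<le> i" and j: "1 \<le> j" and x: "x \<in> F i" and y: "y \<in> F j" and y': "y' \<in> carrier G"
    and yy': "proj j y' = proj j y"
  shows "proj (i + j) (grp_comm G x y') = proj (i + j) (grp_comm G x y)"
proof -
  have xc: "x \<in> carrier G" using F_closed i x .
  have yc: "y \<in> carrier G" using F_closed j y .
  have "proj (i + j) (grp_comm G y' x) = proj (i + j) (grp_comm G y x)"
    using proj_grp_comm_cong_left[OF j i y y' yy' x] by (simp add: add.commute)
  then show ?thesis
    by (simp only: grp_comm_swap[OF xc y'] grp_comm_swap[OF xc yc]
        proj_inv[OF grp_comm_closed[OF y' xc]] proj_inv[OF grp_comm_closed[OF yc xc]])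
qed

lemma proj_grp_comm_cong:
  assumes "1 \<le> i" "1 \<le> j" "x \<in> F i" "x' \<in> F i" "y \<in> F j" "y' \<in> F j"
    and "proj i x' = proj i x" and "proj j y' = proj j y"
  shows "proj (i + j) (grp_comm G x' y') = proj (i + j) (grp_comm G x y)"
proof -
  have "proj (i + j) (grp_comm G x' y') = proj (i + j) (grp_comm G x' y)"
    using proj_grp_comm_cong_right[OF assms(1,2,4,5) F_closed[OF assms(2,6)] assms(8)] .
  also have "\<dots> = proj (i + j) (grp_comm G x y)"
    using proj_grp_comm_cong_left[OF assms(1,2,3) F_closed[OF assms(1,4)] assms(7,5)] .
  finally show ?thesis .
qed

lemma proj_conj_quotient:
  assumes i: "1 \<le> i" and j: "1 \<le> j" and x: "x \<in> F i" and a: "a \<in> F i"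
    and y: "y \<in> F j" and b: "b \<in> F j" and c: "c \<in> F (i + j)"
  shows "proj (i + j) ((x \<otimes> a \<otimes> y \<otimes> inv a) \<otimes> c \<otimes> inv (y \<otimes> b \<otimes> x \<otimes> inv b) \<otimes> inv c) =
    proj (i + j) (grp_comm G a y \<otimes> grp_comm G x b \<otimes> grp_comm G x y)"
proof -
  let ?P = "proj (i + j)" and ?Q = "quot (i + j)"
  let ?u = "x \<otimes> a \<otimes> y \<otimes> inv a" and ?v = "y \<otimes> b \<otimes> x \<otimes> inv b"
  have n: "1 \<le> i + j" using i by simp
  have xc: "x \<in> carrier G" and ac: "a \<in> carrier G" and yc: "y \<in> carrier G"
    and bc: "b \<in> carrier G" and cc: "c \<in> carrier G"
    using F_closed[OF i x] F_closed[OF i a] F_closed[OF j y] F_closed[OF j b] F_closed[OF n c]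
    by simp_all
  have "?P (?u \<otimes> c \<otimes> inv ?v \<otimes> inv c) =
      ?P ?u \<otimes>\<^bsub>?Q\<^esub> ?P c \<otimes>\<^bsub>?Q\<^esub> inv\<^bsub>?Q\<^esub> ?P ?v \<otimes>\<^bsub>?Q\<^esub> inv\<^bsub>?Q\<^esub> ?P c"
    using xc ac yc bc cc by (simp add: proj_mult proj_inv)
  also have "\<dots> = ?P ?u \<otimes>\<^bsub>?Q\<^esub> inv\<^bsub>?Q\<^esub> ?P ?v"
    using xc ac yc bc proj_central[OF n c]
    by (intro group.central_mult_inv_cancel[OF quot_group] proj_closed) simp_all
  also have "\<dots> = (?P x \<otimes>\<^bsub>?Q\<^esub> ?P a \<otimes>\<^bsub>?Q\<^esub> ?P y \<otimes>\<^bsub>?Q\<^esub> inv\<^bsub>?Q\<^esub> ?P a) \<otimes>\<^bsub>?Q\<^esub>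
       inv\<^bsub>?Q\<^esub> (?P y \<otimes>\<^bsub>?Q\<^esub> ?P b \<otimes>\<^bsub>?Q\<^esub> ?P x \<otimes>\<^bsub>?Q\<^esub> inv\<^bsub>?Q\<^esub> ?P b)"
    using xc ac yc bc by (simp add: proj_mult proj_inv)
  also have "\<dots> = grp_comm ?Q (?P a) (?P y) \<otimes>\<^bsub>?Q\<^esub> grp_comm ?Q (?P x) (?P b)
       \<otimes>\<^bsub>?Q\<^esub> grp_comm ?Q (?P x) (?P y)"
    using proj_central[OF n grp_comm_F[OF i j a y]] proj_central[OF n grp_comm_F[OF i j x b]]
      xc ac yc bc
    by (intro group.conj_quotient_eq_grp_comm_prod[OF quot_group] proj_closed)
      (simp_all add: proj_grp_comm)
  also have "\<dots> = ?P (grp_comm G a y \<otimes> grp_comm G x b \<otimes> grp_comm G x y)"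
    using xc ac yc bc by (simp add: proj_mult proj_grp_comm)
  finally show ?thesis .
qed

lemma rep_proj:
  assumes z: "z \<in> carrier G"
  shows "rep (proj n z) \<in> carrier G" and "proj n (rep (proj n z)) = proj n z"
proof -
  have r: "rep (proj n z) \<in> F (Suc n) #> z"
    unfolding rep_def proj_def using rcos_self[OF z F_Suc_subgroup] by (rule someI)
  then show "rep (proj n z) \<in> carrier G"
    using subgroup.elemrcos_carrier[OF F_Suc_subgroup is_group z] by blast
  show "proj n (rep (proj n z)) = proj n z"
    using repr_independence[OF r z F_Suc_subgroup] by (metis proj_def)
qed

lemma rep_proj_F:
  assumes n: "1 \<le> n" and z: "z \<in> F n"
  shows "rep (proj n z) \<in> F n"
proof -
  have zc: "z \<in> carrier G" using F_closed n z .
  have "rep (proj n z) \<otimes> inv z \<in> F (Suc n)"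
    using proj_eq_iff[OF rep_proj(1)[OF zc] zc] rep_proj(2)[OF zc] by blast
  then have "(rep (proj n z) \<otimes> inv z) \<otimes> z \<in> F n"
    using F_Suc_subset[OF n] subgroup.m_closed[OF F_subgroup[OF n]] z by blast
  then show ?thesis using rep_proj(1)[OF zc] zc by (simp add: m_assoc)
qed

lemma rep_F_Suc: "rep (F (Suc n)) \<in> F (Suc n)"
  unfolding rep_def using subgroup.one_closed[OF F_Suc_subgroup] by (rule someI)

lemma gr_component:
  assumes a: "a \<in> gr G F" and n: "1 \<le> n"
  shows "rep (a n) \<in> F n" and "proj n (rep (a n)) = a n"
proof -
  have "a n \<in> gr_n G F n" using a n by (simp add: gr_def)
  then obtain x where x: "x \<in> F n" and ax: "a n = proj n x"
    unfolding gr_n_def proj_def by blast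
  show "rep (a n) \<in> F n" using rep_proj_F[OF n x] ax by simp
  show "proj n (rep (a n)) = a n" using rep_proj(2)[OF F_closed[OF n x]] ax by simp
qed

lemma gr_add_proj:
  assumes "A n = proj n x" "B n = proj n y" "x \<in> carrier G" "y \<in> carrier G"
  shows "gr_add G A B n = proj n (x \<otimes> y)"
  using assms by (simp add: gr_add_def proj_mult quot_mult)

lemma gr_add_trivial:
  assumes "A n = F (Suc n)" "B n = F (Suc n)"
  shows "gr_add G A B n = F (Suc n)"
  using assms subgroup_mult_id[OF F_Suc_subgroup] by (simp add: gr_add_def)

lemma gr_bracket_zero: "gr_bracket G F a b 0 = F (Suc 0)"
  unfolding gr_bracket_def using coset_mult_one[OF subgroup.subset[OF F_Suc_subgroup[of 0]]] by simp

definition comm_prod :: "(nat \<Rightarrow> 'a set) \<Rightarrow> (nat \<Rightarrow> 'a set) \<Rightarrow> nat \<Rightarrow> 'a" where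
  "comm_prod a b n =
     foldr (\<lambda>x y. x \<otimes> y) (map (\<lambda>i. grp_comm G (rep (a i)) (rep (b (n - i)))) [1..<n]) \<one>"

lemma gr_bracket_eq_proj: "gr_bracket G F a b n = proj n (comm_prod a b n)"
  by (simp add: gr_bracket_def proj_def comm_prod_def)

lemma grp_comm_rep_F:
  assumes "a \<in> gr G F" "b \<in> gr G F" "i \<in> set [1..<n]"
  shows "grp_comm G (rep (a i)) (rep (b (n - i))) \<in> F n"
  using grp_comm_F[OF _ _ gr_component(1)[OF assms(1)] gr_component(1)[OF assms(2)], of i "n - i"]
    assms(3) by auto

lemma comm_prod_F:
  assumes "a \<in> gr G F" "b \<in> gr G F" "1 \<le> n"
  shows "comm_prod a b n \<in> F n"
  unfolding comm_prod_def using foldr_mult_F grp_comm_rep_F assms by simp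

lemma proj_comm_prod:
  assumes "a \<in> gr G F" "b \<in> gr G F" "1 \<le> n"
  shows "proj n (comm_prod a b n) = foldr (\<lambda>x y. x \<otimes>\<^bsub>quot n\<^esub> y)
      (map (\<lambda>i. proj n (grp_comm G (rep (a i)) (rep (b (n - i))))) [1..<n]) \<one>\<^bsub>quot n\<^esub>"
  unfolding comm_prod_def using proj_foldr grp_comm_rep_F F_closed assms by (simp add: o_def)

end

locale filtered_rota_baxter_group = filtration G F + rota_baxter_group G R
  for G (structure) and F R +
  assumes R_F: "1 \<le> n \<Longrightarrow> x \<in> F n \<Longrightarrow> R x \<in> F n"
begin

lemma proj_R_cong:
  assumes x: "x \<in> carrier G" and y: "y \<in> carrier G" and xy: "proj n x = proj n y"
  shows "proj n (R x) = proj n (R y)"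
proof -
  have Ry: "R y \<in> carrier G" using R_closed y .
  have "x \<otimes> inv y \<in> F (Suc n)" using proj_eq_iff[OF x y] xy by simp
  from F_Suc_conj_closed[OF inv_closed[OF y] this]
  have "inv y \<otimes> x \<in> F (Suc n)" using x y by (simp add: m_assoc)
  from F_Suc_conj_closed[OF inv_closed[OF Ry] this]
  have h: "inv (R y) \<otimes> (inv y \<otimes> x) \<otimes> R y \<in> F (Suc n)" (is "?h \<in> _") using Ry by simp
  have hc: "?h \<in> carrier G" using F_Suc_closed h .
  have "R y \<otimes> R ?h = R (y \<otimes> R y \<otimes> ?h \<otimes> inv (R y))" using R_mult y hc by simp
  also have "y \<otimes> R y \<otimes> ?h \<otimes> inv (R y) = x" using x y Ry by (simp add: m_assoc)
  finally have "proj n (R x) = proj n (R y) \<otimes>\<^bsub>quot n\<^esub> proj n (R ?h)"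
    using proj_mult[OF Ry R_closed[OF hc]] by simp
  also have "proj n (R ?h) = \<one>\<^bsub>quot n\<^esub>" using proj_F_Suc[OF R_F[OF _ h]] by simp
  finally show ?thesis using monoid.r_one[OF group.is_monoid[OF quot_group] proj_closed[OF Ry]] by simp
qed

lemma proj_R_mult:
  assumes n: "1 \<le> n" and x: "x \<in> carrier G" and y: "y \<in> F n"
  shows "proj n (R (x \<otimes> y)) = proj n (R x) \<otimes>\<^bsub>quot n\<^esub> proj n (R y)"
proof -
  have yc: "y \<in> carrier G" using F_closed n y .
  have Rx: "R x \<in> carrier G" using R_closed x .
  have "R x \<in> F 1" using Rx F_one by simp
  then have "grp_comm G (R x) y \<in> F (Suc n)" using grp_comm_F[of 1 n] n y by simp
  from F_Suc_conj_closed[OF x this]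
  have "x \<otimes> grp_comm G (R x) y \<otimes> inv x \<in> F (Suc n)" .
  moreover have "x \<otimes> grp_comm G (R x) y \<otimes> inv x = (x \<otimes> R x \<otimes> y \<otimes> inv (R x)) \<otimes> inv (x \<otimes> y)"
    using x yc Rx by (simp add: grp_comm_def inv_mult_group m_assoc)
  ultimately have "proj n (x \<otimes> R x \<otimes> y \<otimes> inv (R x)) = proj n (x \<otimes> y)"
    using proj_eq_iff[of "x \<otimes> R x \<otimes> y \<otimes> inv (R x)" "x \<otimes> y" n] x yc Rx by simp
  then have "proj n (R (x \<otimes> R x \<otimes> y \<otimes> inv (R x))) = proj n (R (x \<otimes> y))"
    by (rule proj_R_cong[rotated 2]) (use x yc Rx in simp)+
  then show ?thesis using R_mult[OF x yc] proj_mult[OF Rx R_closed[OF yc]] by simp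
qed

lemma proj_R_foldr:
  "1 \<le> n \<Longrightarrow> \<forall>t\<in>set l. t \<in> F n \<Longrightarrow>
   proj n (R (foldr (\<lambda>x y. x \<otimes> y) l \<one>)) =
     foldr (\<lambda>x y. x \<otimes>\<^bsub>quot n\<^esub> y) (map (\<lambda>t. proj n (R t)) l) \<one>\<^bsub>quot n\<^esub>"
proof (induction l)
  case Nil
  then show ?case using proj_one R_one by simp
next
  case (Cons a l)
  have "proj n (R (a \<otimes> foldr (\<lambda>x y. x \<otimes> y) l \<one>)) =
      proj n (R a) \<otimes>\<^bsub>quot n\<^esub> proj n (R (foldr (\<lambda>x y. x \<otimes> y) l \<one>))"
    using proj_R_mult Cons.prems F_closed foldr_mult_F by simp
  then show ?case using Cons by simp
qed

lemma proj_grp_comm_R: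
  assumes i: "1 \<le> i" and j: "1 \<le> j" and x: "x \<in> F i" and y: "y \<in> F j"
  shows "proj (i + j) (grp_comm G (R x) (R y)) =
     proj (i + j) (R (grp_comm G (R x) y)) \<otimes>\<^bsub>quot (i + j)\<^esub> proj (i + j) (R (grp_comm G x (R y)))
       \<otimes>\<^bsub>quot (i + j)\<^esub> proj (i + j) (R (grp_comm G x y))"
proof -
  let ?P = "proj (i + j)" and ?c = "grp_comm G (R x) (R y)"
  let ?t1 = "grp_comm G (R x) y" and ?t2 = "grp_comm G x (R y)" and ?t3 = "grp_comm G x y"
  have n: "1 \<le> i + j" using i by simp
  have Rx: "R x \<in> F i" and Ry: "R y \<in> F j" using R_F i j x y by auto
  have xc: "x \<in> carrier G" and yc: "y \<in> carrier G" and Rxc: "R x \<in> carrier G"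
    and Ryc: "R y \<in> carrier G" using F_closed i j x y Rx Ry by auto
  have c: "?c \<in> F (i + j)" using grp_comm_F[OF i j Rx Ry] .
  have t: "?t1 \<in> F (i + j)" "?t2 \<in> F (i + j)" "?t3 \<in> F (i + j)"
    using grp_comm_F[OF i j] Rx Ry x y by auto
  have tc: "?t1 \<in> carrier G" "?t2 \<in> carrier G" "?t3 \<in> carrier G" using F_closed[OF n] t by auto
  have "?P ?c = ?P (R ((x \<otimes> R x \<otimes> y \<otimes> inv (R x)) \<otimes> ?c \<otimes> inv (y \<otimes> R y \<otimes> x \<otimes> inv (R y)) \<otimes> inv ?c))"
    using arg_cong[OF grp_comm_R[OF xc yc], of ?P] .
  also have "\<dots> = ?P (R (?t1 \<otimes> ?t2 \<otimes> ?t3))"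
    using proj_R_cong[OF _ _ proj_conj_quotient[OF i j x Rx y Ry c]] xc yc Rxc Ryc tc by simp
  also have "\<dots> = ?P (R ?t1) \<otimes>\<^bsub>quot (i + j)\<^esub> ?P (R ?t2) \<otimes>\<^bsub>quot (i + j)\<^esub> ?P (R ?t3)"
    using proj_R_mult[OF n] tc t by simp
  finally show ?thesis .
qed

lemma proj_grp_comm_R_rep:
  assumes i: "1 \<le> i" and j: "1 \<le> j" and x: "x \<in> F i" and x': "x' \<in> F i" and y: "y \<in> F j"
    and y': "y' \<in> F j" and xx': "proj i x' = proj i (R x)" and yy': "proj j y' = proj j (R y)"
  shows "proj (i + j) (grp_comm G x' y') =
     proj (i + j) (R (grp_comm G x' y)) \<otimes>\<^bsub>quot (i + j)\<^esub> proj (i + j) (R (grp_comm G x y'))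
       \<otimes>\<^bsub>quot (i + j)\<^esub> proj (i + j) (R (grp_comm G x y))"
proof -
  have Rx: "R x \<in> F i" and Ry: "R y \<in> F j" using R_F i j x y by auto
  have xc: "x \<in> carrier G" and x'c: "x' \<in> carrier G" and yc: "y \<in> carrier G"
    and y'c: "y' \<in> carrier G" and Rxc: "R x \<in> carrier G" and Ryc: "R y \<in> carrier G"
    using F_closed i j x x' y y' Rx Ry by auto
  have "proj (i + j) (grp_comm G x' y) = proj (i + j) (grp_comm G (R x) y)"
    using proj_grp_comm_cong[OF i j Rx x' y y xx'] by simp
  then have "proj (i + j) (R (grp_comm G x' y)) = proj (i + j) (R (grp_comm G (R x) y))"
    by (rule proj_R_cong[rotated 2]) (simp_all add: x'c yc Rxc)
  moreover have "proj (i + j) (grp_comm G x y') = proj (i + j) (grp_comm G x (R y))"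
    using proj_grp_comm_cong[OF i j x x Ry y' _ yy'] by simp
  then have "proj (i + j) (R (grp_comm G x y')) = proj (i + j) (R (grp_comm G x (R y)))"
    by (rule proj_R_cong[rotated 2]) (simp_all add: xc y'c Ryc)
  ultimately show ?thesis
    using proj_grp_comm_cong[OF i j Rx x' Ry y' xx' yy'] proj_grp_comm_R[OF i j x y] by simp
qed

lemma gr_R_eq: "gr_R G F R a n = proj n (R (rep (a n)))"
  by (simp add: gr_R_def proj_def)

lemma gr_R_proj:
  assumes "A n = proj n x" and x: "x \<in> carrier G"
  shows "gr_R G F R A n = proj n (R x)"
  using gr_R_eq[of A n] proj_R_cong[OF rep_proj(1)[OF x] x rep_proj(2)[OF x]] assms(1) by simp

lemma gr_R_trivial: "a n = F (Suc n) \<Longrightarrow> gr_R G F R a n = F (Suc n)"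
  using rep_F_Suc R_F[of "Suc n"] subgroup.rcos_const[OF F_Suc_subgroup is_group]
  by (simp add: gr_R_def)

lemma gr_R_closed: "gr_R G F R \<in> gr G F \<rightarrow> gr G F"
proof
  fix a assume a: "a \<in> gr G F"
  have "gr_R G F R a 0 = F 1" using gr_R_trivial[of a 0] a by (simp add: gr_def)
  moreover have "gr_R G F R a n \<in> gr_n G F n" if n: "1 \<le> n" for n
    using gr_R_eq R_F[OF n gr_component(1)[OF a n]] unfolding gr_n_def proj_def by blast
  moreover have "{n. gr_R G F R a n \<noteq> F (Suc n)} \<subseteq> {n. a n \<noteq> F (Suc n)}"
    using gr_R_trivial by blast
  then have "finite {n. gr_R G F R a n \<noteq> F (Suc n)}"
    using a finite_subset by (auto simp: gr_def)
  ultimately show "gr_R G F R a \<in> gr G F" by (simp add: gr_def)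
qed

lemma gr_R_add:
  assumes a: "a \<in> gr G F" and b: "b \<in> gr G F"
  shows "gr_R G F R (gr_add G a b) = gr_add G (gr_R G F R a) (gr_R G F R b)"
proof
  fix n
  show "gr_R G F R (gr_add G a b) n = gr_add G (gr_R G F R a) (gr_R G F R b) n"
  proof (cases "n = 0")
    case True
    have "a 0 = F (Suc 0)" "b 0 = F (Suc 0)" using a b by (simp_all add: gr_def)
    then show ?thesis using True by (simp add: gr_add_trivial gr_R_trivial)
  next
    case False
    then have n: "1 \<le> n" by simp
    let ?x = "rep (a n)" and ?y = "rep (b n)"
    have x: "?x \<in> F n" and y: "?y \<in> F n" using gr_component(1) a b n by auto
    have xc: "?x \<in> carrier G" and yc: "?y \<in> carrier G" using F_closed n x y by auto
    have "gr_add G a b n = proj n (?x \<otimes> ?y)"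
      using gr_add_proj[of a n ?x b ?y] gr_component(2)[OF a n] gr_component(2)[OF b n] xc yc
      by simp
    then have "gr_R G F R (gr_add G a b) n = proj n (R (?x \<otimes> ?y))"
      using gr_R_proj xc yc by simp
    also have "\<dots> = proj n (R ?x) \<otimes>\<^bsub>quot n\<^esub> proj n (R ?y)" using proj_R_mult[OF n xc y] .
    finally show ?thesis by (simp add: gr_add_def gr_R_eq quot_mult)
  qed
qed

lemma proj_R_comm_prod:
  assumes a: "a \<in> gr G F" and b: "b \<in> gr G F" and n: "1 \<le> n"
  shows "proj n (R (comm_prod a b n)) = foldr (\<lambda>x y. x \<otimes>\<^bsub>quot n\<^esub> y)
      (map (\<lambda>i. proj n (R (grp_comm G (rep (a i)) (rep (b (n - i)))))) [1..<n]) \<one>\<^bsub>quot n\<^esub>"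
proof -
  have "\<forall>t\<in>set (map (\<lambda>i. grp_comm G (rep (a i)) (rep (b (n - i)))) [1..<n]). t \<in> F n"
    using grp_comm_rep_F[OF a b] by auto
  from proj_R_foldr[OF n this] show ?thesis by (simp add: comm_prod_def o_def)
qed

lemma proj_grp_comm_rep_gr_R:
  assumes a: "a \<in> gr G F" and b: "b \<in> gr G F" and i: "i \<in> set [1..<n]"
  defines "t c d \<equiv> proj n (R (grp_comm G (rep (c i)) (rep (d (n - i)))))"
  shows "proj n (grp_comm G (rep (gr_R G F R a i)) (rep (gr_R G F R b (n - i)))) =
    t (gr_R G F R a) b \<otimes>\<^bsub>quot n\<^esub> t a (gr_R G F R b) \<otimes>\<^bsub>quot n\<^esub> t a b"
proof -
  have i1: "1 \<le> i" and j1: "1 \<le> n - i" and ij: "i + (n - i) = n" using i by auto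
  have Ra: "gr_R G F R a \<in> gr G F" and Rb: "gr_R G F R b \<in> gr G F" using gr_R_closed a b by auto
  have "proj i (rep (gr_R G F R a i)) = proj i (R (rep (a i)))"
    using gr_component(2)[OF Ra i1] gr_R_eq by simp
  moreover have "proj (n - i) (rep (gr_R G F R b (n - i))) = proj (n - i) (R (rep (b (n - i))))"
    using gr_component(2)[OF Rb j1] gr_R_eq by simp
  ultimately show ?thesis
    using proj_grp_comm_R_rep[OF i1 j1 gr_component(1)[OF a i1] gr_component(1)[OF Ra i1]
        gr_component(1)[OF b j1] gr_component(1)[OF Rb j1]]
    unfolding t_def ij by simp
qed

lemma gr_R_bracket_component:
  assumes a: "a \<in> gr G F" and b: "b \<in> gr G F" and n: "1 \<le> n"
  shows "gr_bracket G F (gr_R G F R a) (gr_R G F R b) n =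
    gr_R G F R (gr_add G (gr_add G (gr_bracket G F (gr_R G F R a) b)
      (gr_bracket G F a (gr_R G F R b))) (gr_bracket G F a b)) n"
proof -
  let ?Ra = "gr_R G F R a" and ?Rb = "gr_R G F R b" and ?Q = "quot n"
  let ?prod = "\<lambda>l. foldr (\<lambda>x y. x \<otimes>\<^bsub>?Q\<^esub> y) l \<one>\<^bsub>?Q\<^esub>"
  let ?p1 = "comm_prod ?Ra b n" and ?p2 = "comm_prod a ?Rb n" and ?p3 = "comm_prod a b n"
  define t where "t c d i = proj n (R (grp_comm G (rep (c i)) (rep (d (n - i)))))" for c d i
  have Ra: "?Ra \<in> gr G F" and Rb: "?Rb \<in> gr G F" using gr_R_closed a b by auto
  have t_F: "R (grp_comm G (rep (c i)) (rep (d (n - i)))) \<in> F n"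
    if "c \<in> gr G F" "d \<in> gr G F" "i \<in> set [1..<n]" for c d i
    using R_F[OF n grp_comm_rep_F[OF that]] .
  have factors: "\<forall>i\<in>set [1..<n]. t ?Ra b i \<in> carrier ?Q \<and>
      group.central ?Q (t a ?Rb i) \<and> group.central ?Q (t a b i)"
    using t_F[OF Ra b] t_F[OF a Rb] t_F[OF a b] F_closed[OF n]
    unfolding t_def by (auto intro: proj_closed proj_central[OF n])
  have p: "?p1 \<in> F n" "?p2 \<in> F n" "?p3 \<in> F n" using comm_prod_F a b Ra Rb n by auto
  have pc: "?p1 \<in> carrier G" "?p2 \<in> carrier G" "?p3 \<in> carrier G" using F_closed[OF n] p by auto
  have "gr_bracket G F ?Ra ?Rb n =
      ?prod (map (\<lambda>i. proj n (grp_comm G (rep (?Ra i)) (rep (?Rb (n - i))))) [1..<n])"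
    using gr_bracket_eq_proj proj_comm_prod[OF Ra Rb n] by simp
  also have "\<dots> = ?prod (map (\<lambda>i. t ?Ra b i \<otimes>\<^bsub>?Q\<^esub> t a ?Rb i \<otimes>\<^bsub>?Q\<^esub> t a b i) [1..<n])"
    using proj_grp_comm_rep_gr_R[OF a b] unfolding t_def
    by (intro arg_cong[where f = ?prod] map_cong) simp_all
  also have "\<dots> = ?prod (map (t ?Ra b) [1..<n]) \<otimes>\<^bsub>?Q\<^esub> ?prod (map (t a ?Rb) [1..<n])
      \<otimes>\<^bsub>?Q\<^esub> ?prod (map (t a b) [1..<n])"
    using group.foldr_mult_central_factors[OF quot_group factors] .
  also have "\<dots> = proj n (R ?p1) \<otimes>\<^bsub>?Q\<^esub> proj n (R ?p2) \<otimes>\<^bsub>?Q\<^esub> proj n (R ?p3)"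
    unfolding t_def using proj_R_comm_prod Ra Rb a b n by simp
  also have "\<dots> = proj n (R (?p1 \<otimes> ?p2 \<otimes> ?p3))"
    using proj_R_mult[OF n _ p(3)] proj_R_mult[OF n pc(1) p(2)] pc by simp
  also have "\<dots> = gr_R G F R (gr_add G (gr_add G (gr_bracket G F ?Ra b)
      (gr_bracket G F a ?Rb)) (gr_bracket G F a b)) n"
    using gr_R_proj gr_add_proj gr_bracket_eq_proj pc by simp
  finally show ?thesis .
qed

lemma gr_R_bracket:
  assumes a: "a \<in> gr G F" and b: "b \<in> gr G F"
  shows "gr_bracket G F (gr_R G F R a) (gr_R G F R b) =
    gr_R G F R (gr_add G (gr_add G (gr_bracket G F (gr_R G F R a) b)
      (gr_bracket G F a (gr_R G F R b))) (gr_bracket G F a b))"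
proof
  fix n
  show "gr_bracket G F (gr_R G F R a) (gr_R G F R b) n =
    gr_R G F R (gr_add G (gr_add G (gr_bracket G F (gr_R G F R a) b)
      (gr_bracket G F a (gr_R G F R b))) (gr_bracket G F a b)) n"
  proof (cases "n = 0")
    case True
    then show ?thesis by (simp add: gr_bracket_zero gr_add_trivial gr_R_trivial)
  next
    case False
    then show ?thesis using gr_R_bracket_component[OF a b] by simp
  qed
qed

lemma gr_R_gr_deg: "gr_R G F R ` gr_deg G F n \<subseteq> gr_deg G F n"
proof
  fix c assume "c \<in> gr_R G F R ` gr_deg G F n"
  then obtain a where a: "a \<in> gr_deg G F n" and c: "c = gr_R G F R a" by blast
  have "c \<in> gr G F" using gr_R_closed a c by (auto simp: gr_deg_def)
  moreover have "\<forall>k. k \<noteq> n \<longrightarrow> c k = F (Suc k)" using a c gr_R_trivial by (simp add: gr_deg_def)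
  ultimately show "c \<in> gr_deg G F n" by (simp add: gr_deg_def)
qed

end

theorem theorem5p11:
  fixes G :: "('a, 'b) monoid_scheme" and F :: "nat \<Rightarrow> 'a set" and R :: "'a \<Rightarrow> 'a"
  assumes "filtered_rota_baxter G F R"
  shows "gr_R G F R \<in> gr G F \<rightarrow> gr G F \<and>
     (\<forall>a\<in>gr G F. \<forall>b\<in>gr G F.
           gr_R G F R (gr_add G a b) = gr_add G (gr_R G F R a) (gr_R G F R b)) \<and>
     (\<forall>a\<in>gr G F. \<forall>b\<in>gr G F.
           gr_bracket G F (gr_R G F R a) (gr_R G F R b) =
           gr_R G F R (gr_add G (gr_add G (gr_bracket G F (gr_R G F R a) b)
                                          (gr_bracket G F a (gr_R G F R b)))
                                (gr_bracket G F a b))) \<and>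
     (\<forall>n\<ge>1. gr_R G F R ` gr_deg G F n \<subseteq> gr_deg G F n)"
proof -
  have "group G" using assms by (simp add: filtered_rota_baxter_def filtered_group_def)
  with assms interpret filtered_rota_baxter_group G F R
    by (auto simp: filtered_rota_baxter_def filtered_rota_baxter_group_def
        filtered_rota_baxter_group_axioms_def filtration_def filtration_axioms_def
        rota_baxter_group_def rota_baxter_group_axioms_def)
  show ?thesis using gr_R_closed gr_R_add gr_R_bracket gr_R_gr_deg by blast
qed

end
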